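(* Let $Z_{1:n}$ be the minimum of an i.i.d. sample of size $n$ from $\mathcal N(0,1)$. For $\theta\in(0,\pi/2)$ let $c_1=\tfrac12-\tfrac{\theta}{\pi}$, $c_2=\tfrac{\cot\theta}{\pi-2\theta}$, and let $\widehat Z_{1:n}\sim\mathcal N(\mu_n,\sigma_n^2)$ with $$\mu_n=-\sqrt{\frac{\log(nc_1)}{c_2}},\qquad \sigma_n^2=\frac{-\log\log 2}{2c_2\big(\log(nc_1)-\log\log 2\big)}.$$ Then there exists an integer $n^*(\theta)$ such that for all $n\ge n^*(\theta)$, $Z_{1:n}\preceq_{\mathrm{st}}\widehat Z_{1:n}$, i.e. $\Pr(Z_{1:n}\ge z)\le\Pr(\widehat Z_{1:n}\ge z)$ for all $z\in\mathbb R$.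
   Context: $\log$ denotes the natural logarithm. For real random variables, $A\preceq_{\mathrm{st}}B$ means $\Pr(A\ge z)\le\Pr(B\ge z)$ for all $z\in\mathbb R$. *)

theory Defs
  imports "HOL-Probability.Probability"
begin

definition c1 :: "real \<Rightarrow> real" where
  "c1 \<theta> = 1/2 - \<theta> / pi"

definition c2 :: "real \<Rightarrow> real" where
  "c2 \<theta> = cot \<theta> / (pi - 2 * \<theta>)"

definition mu_n :: "real \<Rightarrow> nat \<Rightarrow> real" where
  "mu_n \<theta> n = - sqrt (ln (real n * c1 \<theta>) / c2 \<theta>)"

definition sigma2_n :: "real \<Rightarrow> nat \<Rightarrow> real" where
  "sigma2_n \<theta> n = - ln (ln 2) / (2 * c2 \<theta> * (ln (real n * c1 \<theta>) - ln (ln 2)))"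

end

theory Submission
  imports Defs "HOL-Real_Asymp.Real_Asymp"
begin

text \<open>
  Write \<open>m = -\<mu>\<^sub>n\<close>, \<open>s = \<sigma>\<^sub>n\<close>, \<open>Q(z) = P(N(0,1) \<ge> z)\<close> and \<open>G(z) = P(N(-m,s\<^sup>2) \<ge> z)\<close>;
  by independence the claim is \<open>Q(z)\<^sup>n \<le> G(z)\<close>, and \<open>Q\<close> is bounded using the mass of an interval
  \<open>[z - 1, z)\<close> while \<open>G\<close> is bounded below by the mass of an interval of length \<open>s\<close> or by
  Mills' ratio. Three regimes of \<open>z\<close> arise. For \<open>-m - s \<le> z \<le> 1\<close>, \<open>Q(z)\<^sup>n \<le> exp (-n \<phi>(m + 2))\<close>,
  which is smaller than \<open>\<phi>(K) \<le> G(z)\<close> with \<open>K = (m + 1)/s + 1\<close> because \<open>m\<^sup>2 \<approx> log n / c\<^sub>2\<close> and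
  \<open>2 c\<^sub>2 > 1\<close> (this is \<open>tan x > x\<close>). For \<open>z > 1\<close>, \<open>Q(z)\<^sup>n \<le> exp (-n z\<^sup>2/2) \<le> \<phi>(z K) \<le> G(z)\<close>.
  For \<open>z < -m - s\<close>, Mills' ratio gives \<open>G(z) \<ge> 1 - \<phi>(t)\<close> with \<open>t = (-m - z)/s\<close>, while
  \<open>Q(z)\<^sup>n \<le> exp (-n \<phi>(1 - z))\<close>; the variance \<open>\<sigma>\<^sub>n\<^sup>2\<close> is chosen exactly so that completing the
  square in \<open>t\<close> yields \<open>n \<phi>(1 - z) \<ge> 2 \<phi>(t)\<close>, which suffices.
\<close>

abbreviation normal_tail :: "real \<Rightarrow> real \<Rightarrow> real \<Rightarrow> real" where
  "normal_tail m sg z \<equiv> measure (density lborel (normal_density m sg)) {z..}"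

section \<open>The Gaussian density\<close>

lemma normal_density_eq_scaled_std:
  assumes "sg > 0"
  shows "normal_density m sg x = std_normal_density ((x - m) / sg) / sg"
proof -
  have "sqrt (2 * pi * sg\<^sup>2) = sqrt (2 * pi) * sg" using assms by (simp add: real_sqrt_mult)
  moreover have "(x - m)\<^sup>2 / (2 * sg\<^sup>2) = ((x - m) / sg)\<^sup>2 / 2" using assms by (simp add: power_divide)
  ultimately show ?thesis unfolding normal_density_def using assms by simp
qed

lemma normal_density_reflect: "normal_density m sg (2 * m - x) = normal_density m sg x"
  unfolding normal_density_def by (simp add: power2_commute)

lemma std_normal_density_antimono_abs:
  assumes "\<bar>x\<bar> \<le> \<bar>y\<bar>"
  shows "std_normal_density y \<le> std_normal_density x"
proof -
  have "x\<^sup>2 \<le> y\<^sup>2" using assms by (metis abs_le_square_iff)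
  then show ?thesis unfolding std_normal_density_def by (simp add: divide_right_mono)
qed

lemma std_normal_density_le_exp: "std_normal_density x \<le> exp (- x\<^sup>2 / 2)"
proof -
  have "1 \<le> sqrt (2 * pi)" using pi_gt3 by simp
  then show ?thesis unfolding std_normal_density_def by (simp add: divide_le_eq_1 field_simps)
qed

lemma std_normal_density_le_half: "std_normal_density x \<le> 1 / 2"
proof -
  have "2 \<le> sqrt (2 * pi)" using pi_gt3 by (simp add: real_le_rsqrt)
  then have "1 / sqrt (2 * pi) \<le> 1 / 2" by (simp add: frac_le)
  moreover have "exp (- x\<^sup>2 / 2) \<le> 1" by simp
  ultimately have "(1 / sqrt (2 * pi)) * exp (- x\<^sup>2 / 2) \<le> 1 / 2 * 1"
    by (intro mult_mono) auto
  then show ?thesis unfolding std_normal_density_def by simp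
qed

lemma exp_neg_le_std_normal_density:
  assumes "w\<^sup>2 / 2 + 4 \<le> y"
  shows "exp (- y) \<le> std_normal_density w"
proof -
  have "ln (sqrt (2 * pi)) \<le> sqrt (2 * pi) - 1" by (rule ln_le_minus_one) (simp add: pi_gt_zero)
  moreover have "sqrt (2 * pi) \<le> 5" using pi_less_4 by (simp add: real_sqrt_le_iff real_le_lsqrt)
  ultimately have "ln (sqrt (2 * pi)) \<le> y - w\<^sup>2 / 2" using assms by linarith
  then have "sqrt (2 * pi) \<le> exp (y - w\<^sup>2 / 2)"
    by (metis exp_le_cancel_iff exp_ln pi_gt_zero real_sqrt_gt_zero mult_pos_pos zero_less_numeral)
  then have "exp (- w\<^sup>2 / 2) / exp (y - w\<^sup>2 / 2) \<le> exp (- w\<^sup>2 / 2) / sqrt (2 * pi)"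
    by (intro divide_left_mono) (auto simp: pi_gt_zero)
  moreover have "exp (- y) = exp (- w\<^sup>2 / 2) / exp (y - w\<^sup>2 / 2)" by (simp add: exp_diff[symmetric])
  ultimately show ?thesis unfolding std_normal_density_def by simp
qed

lemma normal_density_has_real_derivative:
  assumes "sg > 0"
  shows "(normal_density m sg has_real_derivative - (x - m) / sg\<^sup>2 * normal_density m sg x) (at x)"
proof -
  have "((\<lambda>x. exp (- (x - m)\<^sup>2 / (2 * sg\<^sup>2))) has_real_derivative
      exp (- (x - m)\<^sup>2 / (2 * sg\<^sup>2)) * (- (x - m) / sg\<^sup>2)) (at x)"
    using assms by (auto intro!: derivative_eq_intros simp: field_simps power2_eq_square)
  from DERIV_cmult[OF this, of "1 / sqrt (2 * pi * sg\<^sup>2)"]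
  show ?thesis unfolding normal_density_def[abs_def] by (simp add: ac_simps)
qed

lemma normal_density_tendsto_zero_at_top:
  assumes "sg > 0"
  shows "(normal_density m sg \<longlongrightarrow> 0) at_top"
  unfolding normal_density_def[abs_def] using assms by real_asymp

section \<open>Tails of the Gaussian distribution\<close>

lemma normal_upper_tail_le:
  assumes "sg > 0" "m < z"
  shows "normal_tail m sg z \<le> sg\<^sup>2 * normal_density m sg z / (z - m)"
proof -
  let ?N = "density lborel (normal_density m sg)"
  interpret prob_space ?N using assms by (simp add: prob_space_normal_density)
  \<comment> \<open>Mills' ratio: on \<open>[z, \<infinity>)\<close> the density is at most \<open>(x - m) / (z - m)\<close> times itself,
    which has the explicit antiderivative \<open>F\<close>.\<close>
  define F where "F x = - (sg\<^sup>2 / (z - m)) * normal_density m sg x" for x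
  have F_deriv: "(F has_real_derivative (x - m) / (z - m) * normal_density m sg x) (at x)" for x
    unfolding F_def[abs_def]
    by (rule DERIV_cong[OF DERIV_cmult[OF normal_density_has_real_derivative[OF assms(1)]]])
      (use assms in \<open>simp add: field_simps\<close>)
  have "ennreal (normal_tail m sg z) = (\<integral>\<^sup>+x. ennreal (normal_density m sg x) * indicator {z..} x \<partial>lborel)"
    by (simp add: emeasure_eq_measure[symmetric] emeasure_density)
  also have "\<dots> \<le> (\<integral>\<^sup>+x. ennreal ((x - m) / (z - m) * normal_density m sg x) * indicator {z..} x \<partial>lborel)"
  proof (intro nn_integral_mono)
    fix x
    have "z \<le> x \<Longrightarrow> normal_density m sg x \<le> (x - m) / (z - m) * normal_density m sg x"
      using assms mult_right_mono[of 1 "(x - m) / (z - m)" "normal_density m sg x"] by simp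
    then show "ennreal (normal_density m sg x) * indicator {z..} x
        \<le> ennreal ((x - m) / (z - m) * normal_density m sg x) * indicator {z..} x"
      by (auto intro: ennreal_leI split: split_indicator)
  qed
  also have "\<dots> = ennreal (0 - F z)"
  proof (rule nn_integral_FTC_atLeast[OF _ F_deriv])
    show "(F \<longlongrightarrow> 0) at_top"
      unfolding F_def[abs_def]
      by (rule tendsto_mult_right_zero[OF normal_density_tendsto_zero_at_top[OF assms(1)]])
  qed (use assms in auto)
  finally show ?thesis using assms by (simp add: ennreal_le_iff F_def)
qed

lemma normal_lower_tail_le:
  assumes "sg > 0" "z < m"
  shows "1 - normal_tail m sg z \<le> sg\<^sup>2 * normal_density m sg z / (m - z)"
proof -
  let ?N = "density lborel (normal_density m sg)"
  interpret prob_space ?N using assms by (simp add: prob_space_normal_density)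
  have "1 - normal_tail m sg z = measure ?N {..<z}"
    using prob_compl[of "{z..}"] by (simp add: Compl_eq_Diff_UNIV[symmetric] not_le lessThan_def Compl_eq)
  also have "\<dots> \<le> measure ?N {..z}" by (rule finite_measure_mono) auto
  also have "measure ?N {..z} = normal_tail m sg (2 * m - z)"
  proof -
    have "emeasure ?N {..z} = (\<integral>\<^sup>+x. ennreal (normal_density m sg x) * indicator {..z} x \<partial>lborel)"
      by (simp add: emeasure_density)
    also have "\<dots> = (\<integral>\<^sup>+x. ennreal (normal_density m sg (2 * m + (-1) * x)) * indicator {..z} (2 * m + (-1) * x) \<partial>lborel)"
      using nn_integral_real_affine[of "\<lambda>x. ennreal (normal_density m sg x) * indicator {..z} x" "-1" "2 * m"]
      by simp
    also have "\<dots> = (\<integral>\<^sup>+x. ennreal (normal_density m sg x) * indicator {2 * m - z..} x \<partial>lborel)"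
      using normal_density_reflect by (auto intro!: nn_integral_cong split: split_indicator)
    also have "\<dots> = emeasure ?N {2 * m - z..}"
      by (simp add: emeasure_density)
    finally show ?thesis by (simp add: emeasure_eq_measure)
  qed
  also have "\<dots> \<le> sg\<^sup>2 * normal_density m sg (2 * m - z) / (2 * m - z - m)"
    by (rule normal_upper_tail_le) (use assms in auto)
  also have "\<dots> = sg\<^sup>2 * normal_density m sg z / (m - z)"
    by (simp add: normal_density_reflect)
  finally show ?thesis .
qed

lemma normal_interval_measure_ge:
  assumes "sg > 0" "a \<le> b" "0 \<le> c" "\<And>x. a \<le> x \<Longrightarrow> x < b \<Longrightarrow> c \<le> normal_density m sg x"
  shows "c * (b - a) \<le> measure (density lborel (normal_density m sg)) {a..<b}"
proof -
  interpret prob_space "density lborel (normal_density m sg)"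
    using assms by (simp add: prob_space_normal_density)
  have "ennreal (c * (b - a)) = (\<integral>\<^sup>+x. ennreal c * indicator {a..<b} x \<partial>lborel)"
    using assms by (simp add: nn_integral_cmult_indicator ennreal_mult)
  also have "\<dots> \<le> (\<integral>\<^sup>+x. ennreal (normal_density m sg x) * indicator {a..<b} x \<partial>lborel)"
    using assms(4) by (intro nn_integral_mono) (auto split: split_indicator intro: ennreal_leI)
  also have "\<dots> = emeasure (density lborel (normal_density m sg)) {a..<b}"
    by (simp add: emeasure_density)
  finally show ?thesis by (simp add: emeasure_eq_measure ennreal_le_iff)
qed

lemma normal_tail_ge_of_interval:
  assumes "sg > 0" "z \<le> a" "a \<le> b" "0 \<le> c" "\<And>x. a \<le> x \<Longrightarrow> x < b \<Longrightarrow> c \<le> normal_density m sg x"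
  shows "c * (b - a) \<le> normal_tail m sg z"
proof -
  interpret prob_space "density lborel (normal_density m sg)"
    using assms by (simp add: prob_space_normal_density)
  have "c * (b - a) \<le> measure (density lborel (normal_density m sg)) {a..<b}"
    by (rule normal_interval_measure_ge) (use assms in auto)
  also have "\<dots> \<le> normal_tail m sg z"
    by (rule finite_measure_mono) (use assms in auto)
  finally show ?thesis .
qed

lemma normal_tail_le_of_interval:
  assumes "sg > 0" "b \<le> z" "a \<le> b" "0 \<le> c" "\<And>x. a \<le> x \<Longrightarrow> x < b \<Longrightarrow> c \<le> normal_density m sg x"
  shows "normal_tail m sg z \<le> 1 - c * (b - a)"
proof -
  let ?N = "density lborel (normal_density m sg)"
  interpret prob_space ?N using assms by (simp add: prob_space_normal_density)
  have "measure ?N {z..} + measure ?N {a..<b} = measure ?N ({z..} \<union> {a..<b})"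
    by (rule finite_measure_Union[symmetric]) (use assms in auto)
  also have "\<dots> \<le> 1" by (rule prob_le_1)
  finally show ?thesis using normal_interval_measure_ge[OF assms(1,3-5)] by linarith
qed

lemma measure_Min_ge_iid_std_normal:
  fixes M :: "'a measure" and X :: "nat \<Rightarrow> 'a \<Rightarrow> real"
  assumes "prob_space M" and indep: "prob_space.indep_vars M (\<lambda>_. borel) X {..<n}"
    and distr: "\<forall>i<n. distributed M lborel (X i) (normal_density 0 1)" and "1 \<le> n"
  shows "measure M {\<omega> \<in> space M. z \<le> Min ((\<lambda>i. X i \<omega>) ` {..<n})} = normal_tail 0 1 z ^ n"
proof -
  interpret prob_space M by fact
  have ne: "{..<n} \<noteq> {}" using \<open>1 \<le> n\<close> by (auto simp: lessThan_empty_iff)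
  have "{\<omega> \<in> space M. z \<le> Min ((\<lambda>i. X i \<omega>) ` {..<n})} = (\<Inter>i\<in>{..<n}. X i -` {z..} \<inter> space M)"
    using ne by auto
  then have "measure M {\<omega> \<in> space M. z \<le> Min ((\<lambda>i. X i \<omega>) ` {..<n})}
      = (\<Prod>i\<in>{..<n}. prob (X i -` {z..} \<inter> space M))"
    using indep_varsD_finite[OF indep ne] by simp
  also have "\<dots> = (\<Prod>i\<in>{..<n}. normal_tail 0 1 z)"
  proof (rule prod.cong)
    fix i assume "i \<in> {..<n}"
    then have Xi: "distributed M lborel (X i) (normal_density 0 1)" using distr by auto
    have "prob (X i -` {z..} \<inter> space M) = measure (distr M lborel (X i)) {z..}"
      by (rule measure_distr[symmetric]) (use distributed_measurable[OF Xi] in auto)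
    then show "prob (X i -` {z..} \<inter> space M) = normal_tail 0 1 z"
      unfolding distributed_distr_eq_density[OF Xi] .
  qed simp
  finally show ?thesis by simp
qed

section \<open>Stochastic domination of the minimum\<close>

lemma power_le_exp_neg_of_le_one_minus:
  fixes q p :: real
  assumes "0 \<le> q" "q \<le> 1 - p"
  shows "q ^ n \<le> exp (- (real n * p))"
proof -
  have "q \<le> exp (- p)" using assms exp_ge_add_one_self[of "- p"] by linarith
  then have "q ^ n \<le> exp (- p) ^ n" using assms by (intro power_mono) auto
  also have "\<dots> = exp (- (real n * p))" by (simp add: exp_of_nat_mult[symmetric])
  finally show ?thesis .
qed

lemma exp_neg_le_one_minus:
  fixes q x :: real
  assumes "0 \<le> q" "q \<le> 1 / 2" "2 * q \<le> x"
  shows "exp (- x) \<le> 1 - q"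
proof -
  have x0: "0 \<le> x" using assms by linarith
  have "exp (- x) \<le> 1 / (1 + x)"
    using exp_ge_add_one_self[of x] x0 by (simp add: exp_minus inverse_eq_divide divide_left_mono)
  also have "1 / (1 + x) \<le> 1 - q"
  proof -
    have "q * x \<le> 1 / 2 * x" using assms x0 by (intro mult_right_mono) auto
    then have "1 \<le> (1 - q) * (1 + x)" using assms by (simp add: algebra_simps)
    then show ?thesis using x0 by (simp add: divide_le_eq)
  qed
  finally show ?thesis .
qed

definition comparison_width :: "real \<Rightarrow> real \<Rightarrow> real" where
  "comparison_width m s = (m + 1) / s + 1"

definition comparison_conditions :: "real \<Rightarrow> real \<Rightarrow> real \<Rightarrow> bool" where
  "comparison_conditions N m s \<longleftrightarrow> 0 \<le> m \<and> 0 < s \<and> s < 1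
     \<and> (comparison_width m s)\<^sup>2 / 2 + 4 \<le> N * std_normal_density (m + 2)
     \<and> (m + 1)\<^sup>2 \<le> (1 - s\<^sup>2) * (2 * ln N - 2 * ln 2)
     \<and> (comparison_width m s)\<^sup>2 + 8 \<le> N"

lemma std_normal_tail_power_le_central:
  assumes "0 \<le> m" "0 < s" "s < 1" "- m - s \<le> z" "z \<le> 1"
    and "(comparison_width m s)\<^sup>2 / 2 + 4 \<le> real n * std_normal_density (m + 2)"
  shows "normal_tail 0 1 z ^ n \<le> normal_tail (- m) s z"
proof -
  define K where "K = comparison_width m s"
  have "normal_tail 0 1 z \<le> 1 - std_normal_density (m + 2) * (z - (z - 1))"
  proof (rule normal_tail_le_of_interval)
    fix x assume "z - 1 \<le> x" "x < z"
    then have "\<bar>x\<bar> \<le> \<bar>m + 2\<bar>" using assms by auto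
    then show "std_normal_density (m + 2) \<le> std_normal_density x"
      by (rule std_normal_density_antimono_abs)
  qed auto
  then have "normal_tail 0 1 z ^ n \<le> exp (- (real n * std_normal_density (m + 2)))"
    by (intro power_le_exp_neg_of_le_one_minus) auto
  also have "\<dots> \<le> std_normal_density K"
    by (rule exp_neg_le_std_normal_density) (use assms(6) in \<open>simp add: K_def\<close>)
  also have "\<dots> = std_normal_density K / s * (max z (- m) + s - max z (- m))"
    using assms by simp
  also have "\<dots> \<le> normal_tail (- m) s z"
  proof (rule normal_tail_ge_of_interval)
    fix x assume x: "max z (- m) \<le> x" "x < max z (- m) + s"
    have "(x + m) / s \<le> ((1 + m) + s) / s"
      using x assms by (intro divide_right_mono) auto
    also have "\<dots> = K" unfolding K_def comparison_width_def using assms by (simp add: field_simps)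
    finally have "\<bar>(x + m) / s\<bar> \<le> \<bar>K\<bar>" using x assms by simp
    then have "std_normal_density K \<le> std_normal_density ((x + m) / s)"
      by (rule std_normal_density_antimono_abs)
    then have "std_normal_density K / s \<le> std_normal_density ((x + m) / s) / s"
      using assms by (simp add: divide_right_mono)
    also have "\<dots> = normal_density (- m) s x"
      using normal_density_eq_scaled_std[OF assms(2), of "- m" x] by simp
    finally show "std_normal_density K / s \<le> normal_density (- m) s x" .
  qed (use assms in auto)
  finally show ?thesis .
qed

lemma std_normal_tail_power_le_right:
  assumes "0 \<le> m" "0 < s" "1 < z" "(comparison_width m s)\<^sup>2 + 8 \<le> real n"
  shows "normal_tail 0 1 z ^ n \<le> normal_tail (- m) s z"
proof -
  define K where "K = comparison_width m s"
  have K1: "1 \<le> K" unfolding K_def comparison_width_def using assms by simp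
  have "normal_tail 0 1 z \<le> 1\<^sup>2 * std_normal_density z / (z - 0)"
    by (rule normal_upper_tail_le) (use assms in auto)
  also have "\<dots> \<le> std_normal_density z"
    using assms mult_right_mono[of 1 z "std_normal_density z"] by (simp add: divide_le_eq mult.commute)
  also have "\<dots> \<le> exp (- z\<^sup>2 / 2)" by (rule std_normal_density_le_exp)
  finally have "normal_tail 0 1 z ^ n \<le> exp (- z\<^sup>2 / 2) ^ n" by (intro power_mono) auto
  also have "\<dots> = exp (- (real n * z\<^sup>2 / 2))" by (simp add: exp_of_nat_mult[symmetric])
  also have "\<dots> \<le> std_normal_density (z * K)"
  proof (rule exp_neg_le_std_normal_density)
    have z2: "1 \<le> z\<^sup>2" using assms by (simp add: one_le_power)
    have "(K\<^sup>2 + 8) * z\<^sup>2 \<le> real n * z\<^sup>2" using assms(4) unfolding K_def by (intro mult_right_mono) auto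
    then show "(z * K)\<^sup>2 / 2 + 4 \<le> real n * z\<^sup>2 / 2" using z2
      by (simp add: power_mult_distrib algebra_simps)
  qed
  also have "\<dots> = std_normal_density (z * K) / s * (z + s - z)"
    using assms by simp
  also have "\<dots> \<le> normal_tail (- m) s z"
  proof (rule normal_tail_ge_of_interval)
    fix x assume x: "z \<le> x" "x < z + s"
    have "m \<le> z * m" "s \<le> z * s"
      using assms mult_right_mono[of 1 z m] mult_right_mono[of 1 z s] by auto
    then have "x + m \<le> z * (1 + m) + z * s" using x unfolding distrib_left by linarith
    then have "(x + m) / s \<le> (z * (1 + m) + z * s) / s" using assms by (simp add: divide_right_mono)
    also have "\<dots> = z * K" unfolding K_def comparison_width_def using assms by (simp add: field_simps)
    finally have "\<bar>(x + m) / s\<bar> \<le> \<bar>z * K\<bar>" using x assms K1 by simp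
    then have "std_normal_density (z * K) \<le> std_normal_density ((x + m) / s)"
      by (rule std_normal_density_antimono_abs)
    then have "std_normal_density (z * K) / s \<le> std_normal_density ((x + m) / s) / s"
      using assms by (simp add: divide_right_mono)
    also have "\<dots> = normal_density (- m) s x"
      using normal_density_eq_scaled_std[OF assms(2), of "- m" x] by simp
    finally show "std_normal_density (z * K) / s \<le> normal_density (- m) s x" .
  qed (use assms in auto)
  finally show ?thesis .
qed

lemma two_std_normal_density_le:
  assumes "0 < s" "s < 1" "0 < N" "(m + 1)\<^sup>2 \<le> (1 - s\<^sup>2) * (2 * ln N - 2 * ln 2)"
  shows "2 * std_normal_density t \<le> N * std_normal_density (m + 1 + s * t)"
proof -
  have s2: "0 < 1 - s\<^sup>2" using assms by (simp add: power_less_one_iff abs_less_iff)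
  \<comment> \<open>Completing the square in \<open>t\<close>.\<close>
  have "(1 - s\<^sup>2) * ((m + 1 + s * t)\<^sup>2 - t\<^sup>2) - (m + 1)\<^sup>2 = - (s * (m + 1) - (1 - s\<^sup>2) * t)\<^sup>2"
    by (simp add: power2_eq_square algebra_simps)
  then have "(1 - s\<^sup>2) * ((m + 1 + s * t)\<^sup>2 - t\<^sup>2) \<le> (1 - s\<^sup>2) * (2 * ln N - 2 * ln 2)"
    using assms(4) zero_le_power2[of "s * (m + 1) - (1 - s\<^sup>2) * t"] by linarith
  then have "ln 2 + - t\<^sup>2 / 2 \<le> ln N + - (m + 1 + s * t)\<^sup>2 / 2" using s2 by simp
  then have "exp (ln 2) * exp (- t\<^sup>2 / 2) \<le> exp (ln N) * exp (- (m + 1 + s * t)\<^sup>2 / 2)"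
    unfolding exp_add[symmetric] by simp
  then have "2 * exp (- t\<^sup>2 / 2) \<le> N * exp (- (m + 1 + s * t)\<^sup>2 / 2)"
    using assms(3) by simp
  then show ?thesis unfolding std_normal_density_def by (simp add: divide_right_mono field_simps)
qed

lemma std_normal_tail_power_le_left:
  assumes "0 \<le> m" "0 < s" "s < 1" "z < - m - s" "0 < real n"
    and "(m + 1)\<^sup>2 \<le> (1 - s\<^sup>2) * (2 * ln (real n) - 2 * ln 2)"
  shows "normal_tail 0 1 z ^ n \<le> normal_tail (- m) s z"
proof -
  define t where "t = (- m - z) / s"
  have t1: "1 < t" unfolding t_def using assms by (simp add: field_simps)
  have z_eq: "z = - m - s * t" unfolding t_def using assms by simp
  have "1 - normal_tail (- m) s z \<le> s\<^sup>2 * normal_density (- m) s z / (- m - z)"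
    by (rule normal_lower_tail_le) (use assms in auto)
  also have "\<dots> = std_normal_density t / t"
    using normal_density_eq_scaled_std[OF assms(2), of "- m" z] assms t1
    by (simp add: z_eq power2_eq_square field_simps std_normal_density_def)
  also have "\<dots> \<le> std_normal_density t"
    using t1 mult_right_mono[of 1 t "std_normal_density t"] by (simp add: divide_le_eq mult.commute)
  finally have lower: "1 - std_normal_density t \<le> normal_tail (- m) s z" by simp
  define p where "p = std_normal_density (1 - z)"
  have "normal_tail 0 1 z \<le> 1 - p * (z - (z - 1))"
  proof (rule normal_tail_le_of_interval)
    fix x assume "z - 1 \<le> x" "x < z"
    then have "\<bar>x\<bar> \<le> \<bar>1 - z\<bar>" using assms by auto
    then show "p \<le> std_normal_density x" unfolding p_def by (rule std_normal_density_antimono_abs)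
  qed (auto simp: p_def)
  then have "normal_tail 0 1 z ^ n \<le> exp (- (real n * p))"
    by (intro power_le_exp_neg_of_le_one_minus) auto
  also have "\<dots> \<le> 1 - std_normal_density t"
  proof (rule exp_neg_le_one_minus)
    have "1 - z = m + 1 + s * t" by (simp add: z_eq)
    then show "2 * std_normal_density t \<le> real n * p"
      unfolding p_def by (metis two_std_normal_density_le[OF assms(2,3,5,6)])
  qed (use std_normal_density_le_half[of t] in auto)
  finally show ?thesis using lower by linarith
qed

lemma std_normal_tail_power_le:
  assumes "comparison_conditions (real n) m s"
  shows "normal_tail 0 1 z ^ n \<le> normal_tail (- m) s z"
proof -
  have n: "0 < real n"
    using assms unfolding comparison_conditions_def by (smt (verit) zero_le_power2)
  consider "z < - m - s" | "- m - s \<le> z" "z \<le> 1" | "1 < z" by linarith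
  then show ?thesis
  proof cases
    case 1
    then show ?thesis
      using assms n std_normal_tail_power_le_left unfolding comparison_conditions_def by blast
  next
    case 2
    then show ?thesis
      using assms std_normal_tail_power_le_central unfolding comparison_conditions_def by blast
  next
    case 3
    then show ?thesis
      using assms std_normal_tail_power_le_right unfolding comparison_conditions_def by blast
  qed
qed

lemma tan_gt_self:
  fixes x :: real
  assumes "0 < x" "x < pi / 2"
  shows "x < tan x"
proof -
  have "(tan has_real_derivative inverse ((cos y)\<^sup>2)) (at y)" if "0 \<le> y" "y \<le> x" for y
    using that assms cos_gt_zero_pi[of y] by (intro DERIV_tan) auto
  from MVT2[OF \<open>0 < x\<close> this]
  obtain y where y: "0 < y" "y < x" and tan_x: "tan x = x * inverse ((cos y)\<^sup>2)" by auto
  have "0 < cos y" using y assms cos_gt_zero_pi[of y] by auto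
  moreover have "0 < sin y" using y assms by (intro sin_gt_zero) auto
  then have "(cos y)\<^sup>2 < 1" using sin_cos_squared_add[of y] zero_less_power2[of "sin y"] by linarith
  ultimately have "1 < inverse ((cos y)\<^sup>2)" by (simp add: one_less_inverse)
  then show ?thesis using tan_x assms by simp
qed

lemma c1_pos:
  assumes "0 < \<theta>" "\<theta> < pi / 2"
  shows "0 < c1 \<theta>"
  using assms unfolding c1_def by (simp add: field_simps)

lemma c2_gt_half:
  assumes "0 < \<theta>" "\<theta> < pi / 2"
  shows "1 / 2 < c2 \<theta>"
proof -
  define x where "x = pi / 2 - \<theta>"
  have x: "0 < x" "x < pi / 2" using assms unfolding x_def by auto
  have "c2 \<theta> = tan x / (2 * x)"
    unfolding c2_def x_def by (simp add: tan_cot' algebra_simps)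
  then have "x * 1 < x * (2 * c2 \<theta>)" using tan_gt_self[OF x] x by (simp add: field_simps)
  then show ?thesis using x by simp
qed

lemma power2_add_le_weighted:
  fixes x c d :: real
  assumes "0 < d"
  shows "(x + c)\<^sup>2 \<le> (1 + d / 4) * x\<^sup>2 + c\<^sup>2 * (1 + 4 / d)"
proof -
  have "0 \<le> d / 4 * (x - 4 * c / d)\<^sup>2" using assms by simp
  also have "d / 4 * (x - 4 * c / d)\<^sup>2 = d / 4 * x\<^sup>2 - 2 * c * x + 4 * c\<^sup>2 / d"
    using assms by (simp add: power2_eq_square field_simps)
  finally show ?thesis using assms by (simp add: power2_eq_square field_simps)
qed

lemma shifted_sqrt_square_le:
  fixes u k c d :: real
  assumes "0 < d" "d < 2" "0 \<le> u" "0 \<le> u + k" "0 \<le> c" "c \<le> 2"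
  shows "(sqrt ((2 - d) * (u + k)) + c)\<^sup>2 \<le> (2 - d / 2) * u + ((1 + d / 4) * (2 - d) * \<bar>k\<bar> + 4 + 16 / d)"
proof -
  have "(1 + d / 4) * (2 - d) * u \<le> (2 - d / 2) * u"
    using assms by (intro mult_right_mono) (auto simp: algebra_simps)
  moreover have "(1 + d / 4) * (2 - d) * k \<le> (1 + d / 4) * (2 - d) * \<bar>k\<bar>"
    using assms by (intro mult_left_mono) auto
  moreover have "c\<^sup>2 * (1 + 4 / d) \<le> 4 + 16 / d"
  proof -
    have "c\<^sup>2 * (1 + 4 / d) \<le> 4 * (1 + 4 / d)"
      using assms power_mono[of c 2 2] by (intro mult_right_mono) auto
    then show ?thesis by (simp add: distrib_left)
  qed
  moreover have "(sqrt ((2 - d) * (u + k)) + c)\<^sup>2 \<le> (1 + d / 4) * ((2 - d) * (u + k)) + c\<^sup>2 * (1 + 4 / d)"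
    using power2_add_le_weighted[OF assms(1), of "sqrt ((2 - d) * (u + k))" c] assms by simp
  moreover have "(1 + d / 4) * ((2 - d) * (u + k)) = (1 + d / 4) * (2 - d) * u + (1 + d / 4) * (2 - d) * k"
    by (simp only: distrib_left mult.assoc)
  ultimately show ?thesis by linarith
qed

lemma exp_div_sqrt_le_exp_mult_std_normal_density:
  assumes "w\<^sup>2 / 2 \<le> u - v"
  shows "exp v / sqrt (2 * pi) \<le> exp u * std_normal_density w"
proof -
  have "exp v \<le> exp (u + - w\<^sup>2 / 2)" using assms by simp
  then show ?thesis unfolding std_normal_density_def exp_add by (simp add: divide_right_mono)
qed

lemma comparison_conditions_eventually:
  fixes a b k l :: real
  assumes "0 < a" "a < 2" "0 < b"
  shows "eventually (\<lambda>u. comparison_conditions (exp u) (sqrt (a * (u + k))) (sqrt (b / (u + k - l)))) at_top"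
proof -
  define d where "d = 2 - a"
  have d: "0 < d" "d < 2" and a: "a = 2 - d" using assms unfolding d_def by auto
  define C where "C = (1 + d / 4) * (2 - d) * \<bar>k\<bar> + 4 + 16 / d"
  have "eventually (\<lambda>u. 0 \<le> u \<and> ln 2 \<le> u \<and> - k \<le> u \<and> l - k + 1 \<le> u \<and> 4 * (C + 2) / d \<le> u) at_top"
    by (intro eventually_conj eventually_ge_at_top)
  moreover have "eventually (\<lambda>u. b / (u + k - l) \<le> d / 8) at_top"
    using assms d by real_asymp
  moreover have "eventually (\<lambda>u. ((sqrt (a * (u + k)) + 1) / sqrt (b / (u + k - l)) + 1)\<^sup>2 / 2 + 4
      \<le> exp (d * u / 4 - C / 2) / sqrt (2 * pi)) at_top"
    using assms d by real_asymp
  moreover have "eventually (\<lambda>u. ((sqrt (a * (u + k)) + 1) / sqrt (b / (u + k - l)) + 1)\<^sup>2 + 8 \<le> exp u) at_top"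
    using assms by real_asymp
  ultimately show ?thesis
  proof eventually_elim
    case (elim u)
    define m where "m = sqrt (a * (u + k))"
    define s where "s = sqrt (b / (u + k - l))"
    have u: "0 \<le> u" "0 \<le> u + k" "0 < u + k - l" "ln 2 \<le> u"
      using elim by auto
    have s2: "s\<^sup>2 = b / (u + k - l)" unfolding s_def using assms u by simp
    have "b / (u + k - l) \<le> d / 8" using elim by blast
    then have "b / (u + k - l) < 1" using d by linarith
    then have s: "0 < s" "s < 1" using assms u unfolding s_def by auto
    have m_sq: "(m + c)\<^sup>2 \<le> (2 - d / 2) * u + C" if "0 \<le> c" "c \<le> 2" for c
      unfolding m_def a C_def using shifted_sqrt_square_le[OF d u(1,2) that] .
    have "exp (d * u / 4 - C / 2) / sqrt (2 * pi) \<le> exp u * std_normal_density (m + 2)"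
      by (rule exp_div_sqrt_le_exp_mult_std_normal_density) (use m_sq[of 2] in \<open>simp add: algebra_simps\<close>)
    moreover have "(m + 1)\<^sup>2 \<le> (1 - s\<^sup>2) * (2 * u - 2 * ln 2)"
    proof -
      have "(m + 1)\<^sup>2 \<le> (2 - d / 4) * u - 2"
        using m_sq[of 1] elim d by (simp add: field_simps)
      also have "\<dots> \<le> (1 - d / 8) * (2 * u - 2 * ln 2)"
        using d ln_2_less_1 mult_mono[of "1 - d / 8" 1 "2 * ln 2" 2] by (simp add: algebra_simps)
      also have "\<dots> \<le> (1 - s\<^sup>2) * (2 * u - 2 * ln 2)"
        using s2 elim u by (intro mult_right_mono) auto
      finally show ?thesis .
    qed
    ultimately show ?case
      using elim m_def s_def s real_sqrt_ge_zero[of "a * (u + k)"] assms u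
      unfolding comparison_conditions_def comparison_width_def by auto
  qed
qed

lemma comparison_conditions_mu_sigma_eventually:
  assumes "0 < \<theta>" "\<theta> < pi / 2"
  shows "eventually (\<lambda>n. comparison_conditions (real n) (- mu_n \<theta> n) (sqrt (sigma2_n \<theta> n))) sequentially"
proof -
  define a where "a = 1 / c2 \<theta>"
  define l where "l = ln (ln (2::real))"
  define b where "b = - l / (2 * c2 \<theta>)"
  define k where "k = ln (c1 \<theta>)"
  have c2: "1 / 2 < c2 \<theta>" and c1: "0 < c1 \<theta>" using c2_gt_half[OF assms] c1_pos[OF assms] .
  have "l < 0" unfolding l_def using ln_2_less_1 by (simp add: ln_less_zero)
  then have "0 < a" "a < 2" "0 < b" unfolding a_def b_def using c2 by (auto simp: field_simps)
  from comparison_conditions_eventually[OF this, of k l]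
  have "eventually (\<lambda>n. comparison_conditions (exp (ln (real n)))
      (sqrt (a * (ln (real n) + k))) (sqrt (b / (ln (real n) + k - l)))) sequentially"
    by (rule eventually_compose_filterlim[OF _ filterlim_compose[OF ln_at_top filterlim_real_sequentially]])
  moreover have "eventually (\<lambda>n. 1 \<le> n) sequentially" by (rule eventually_ge_at_top)
  ultimately show ?thesis
  proof eventually_elim
    case (elim n)
    then have "ln (real n * c1 \<theta>) = ln (real n) + k" unfolding k_def using c1 by (simp add: ln_mult)
    then show ?case
      using elim unfolding mu_n_def sigma2_n_def a_def b_def l_def by simp
  qed
qed

theorem mainTheorem5:
  fixes \<theta> :: real
  assumes "0 < \<theta>" and "\<theta> < pi / 2"
  shows "\<exists>n0::nat. \<forall>n\<ge>n0. \<forall>(M::'a measure) (X::nat \<Rightarrow> 'a \<Rightarrow> real).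
    (prob_space M \<and> prob_space.indep_vars M (\<lambda>_. borel) X {..<n}
      \<and> (\<forall>i<n. distributed M lborel (X i) (normal_density 0 1)))
    \<longrightarrow> (\<forall>z::real.
          measure M {\<omega> \<in> space M. z \<le> Min ((\<lambda>i. X i \<omega>) ` {..<n})}
          \<le> measure (density lborel (normal_density (mu_n \<theta> n) (sqrt (sigma2_n \<theta> n)))) {z..})"
proof -
  obtain N where N: "\<And>n. N \<le> n \<Longrightarrow> comparison_conditions (real n) (- mu_n \<theta> n) (sqrt (sigma2_n \<theta> n))"
    using comparison_conditions_mu_sigma_eventually[OF assms] by (auto simp: eventually_sequentially)
  show ?thesis
  proof (intro exI[of _ "max N 1"] allI impI)
    fix n :: nat and M :: "'a measure" and X :: "nat \<Rightarrow> 'a \<Rightarrow> real" and z :: real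
    assume n: "max N 1 \<le> n" and sample: "prob_space M \<and> prob_space.indep_vars M (\<lambda>_. borel) X {..<n}
      \<and> (\<forall>i<n. distributed M lborel (X i) (normal_density 0 1))"
    have "measure M {\<omega> \<in> space M. z \<le> Min ((\<lambda>i. X i \<omega>) ` {..<n})} = normal_tail 0 1 z ^ n"
      using sample n by (intro measure_Min_ge_iid_std_normal) auto
    also have "\<dots> \<le> normal_tail (- (- mu_n \<theta> n)) (sqrt (sigma2_n \<theta> n)) z"
      using n by (intro std_normal_tail_power_le N) simp
    finally show "measure M {\<omega> \<in> space M. z \<le> Min ((\<lambda>i. X i \<omega>) ` {..<n})}
        \<le> normal_tail (mu_n \<theta> n) (sqrt (sigma2_n \<theta> n)) z" by simp
  qed
qed

end
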